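(* For any values of $k$, $\mu$, and $\nu$, \[ \,_{2}F_{3}\left(\tfrac{1}{2},\tfrac{\mu}{2}+\tfrac{\nu}{2}+1;\mu+1,\nu+1,\mu+\nu+1;-k^{2}\right) =\frac{2^{2(\mu+\nu)-3}(\mu+\nu-1)\Gamma(\mu+1)\Gamma(\nu+1)}{\pi\,\Gamma(\mu+\nu-1)} \sum_{L=0}^{\infty}\frac{(-1)^{2L}k^{4L}2^{4L-2\mu-2\nu+2}\left(\left(\frac{\mu}{2}+\frac{\nu}{2}\right)_{2L}\right)^{2}\Gamma(2L+\mu+\nu-1)}{(2L)!\left(L+\frac{1}{2}\right)_{\mu+\frac{1}{2}}\left(L+\frac{1}{2}\right)_{\nu+\frac{1}{2}}\left(2L+\frac{\mu}{2}+\frac{\nu}{2}-\frac{1}{2}\right)\left((\mu+\nu-1)_{2L}\right)^{2}\left((2L+\mu+\nu-1)_{2L}\right)^{2}} \,_{1}F_{2}\left(L+\tfrac{1}{2};L+\mu+1,2L+\tfrac{\mu}{2}+\tfrac{\nu}{2}+\tfrac{1}{2};-\tfrac{k^{2}}{4}\right)\,_{1}F_{2}\left(L+\tfrac{1}{2};2L+\tfrac{\mu}{2}+\tfrac{\nu}{2}+\tfrac{1}{2},L+\nu+1;-\tfrac{k^{2}}{4}\right). \]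
   Context: $\,_{p}F_{q}(a_1,\dots,a_p;b_1,\dots,b_q;z)=\sum_{n\ge0}\frac{(a_1)_n\cdots(a_p)_n}{(b_1)_n\cdots(b_q)_n}\frac{z^n}{n!}$ is the generalized hypergeometric function. $(c)_g=\Gamma(c+g)/\Gamma(c)$ denotes the Pochhammer symbol (for arbitrary $g$). *)

theory Defs
  imports "HOL-Analysis.Analysis"
begin

definition hypergeo :: "complex list \<Rightarrow> complex list \<Rightarrow> complex \<Rightarrow> complex" where
  "hypergeo as bs z =
     (\<Sum>n. (\<Prod>a\<leftarrow>as. pochhammer a n) / (\<Prod>b\<leftarrow>bs. pochhammer b n) * z ^ n / fact n)"

definition gen_poch :: "complex \<Rightarrow> complex \<Rightarrow> complex" where
  "gen_poch c g = Gamma (c + g) / Gamma c"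

end

theory Submission
  imports Defs
begin

text \<open>
  Put c = (\<mu> + \<nu> + 1)/2 and M n = (1/2)_n / (4^n (c)_n), the moments of a beta distribution
  on [0, 1/4]. Their Hankel matrix factors as M (p + q) = \<Sum>L. G p L * D L * G q L, where G p L
  (hankel_lower) is the coefficient of the L-th monic orthogonal polynomial in x^p and D L
  (hankel_diag) is its squared norm; this factorization follows from the three-term recurrence
  alone. By Vandermonde's convolution and the duplication formula, the n-th coefficient of the 2F3
  in z is M n * \<Sum>p+q=n. 1 / (p! (\<mu>+1)_p q! (\<nu>+1)_q). Inserting the factorization and summing
  over L last (all three indices are dominated by geometric and exponential series) gives
  \<Sum>L. D L * U L * V L with U L = \<Sum>p. G p L z^p / (p! (\<mu>+1)_p), which is z^L / (L! (\<mu>+1)_L)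
  times a 1F2 in z/4, and likewise V L. The Gamma factors of the stated summand reduce to D L
  because Gamma(1/2)^2 = pi.
\<close>

section \<open>Pochhammer symbols\<close>

lemma pochhammer_shift_nonzero:
  fixes c :: "'a::field_char_0"
  assumes "\<And>n. c + of_nat n \<noteq> 0"
  shows "pochhammer (c + of_nat x) m \<noteq> 0"
proof
  assume "pochhammer (c + of_nat x) m = 0"
  then obtain k where "c + of_nat x = - of_nat k" by (auto simp: pochhammer_eq_0_iff)
  then have "c + of_nat (x + k) = 0" by (simp add: add.assoc [symmetric])
  with assms show False by blast
qed

lemma of_nat_shift_neq_0:
  "of_nat n + 1 \<noteq> (0::'a::field_char_0)" "2 * of_nat n + 1 \<noteq> (0::'a)" "2 * of_nat n + 2 \<noteq> (0::'a)"
  using of_nat_eq_0_iff[of "n+1", where 'a='a] of_nat_eq_0_iff[of "2*n+1", where 'a='a]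
    of_nat_eq_0_iff[of "2*n+2", where 'a='a]
  by (simp_all add: add.commute)

lemma half_plus_of_nat_neq_0: "1/2 + of_nat n \<noteq> (0::'a::field_char_0)"
proof
  assume "1/2 + of_nat n = (0::'a)"
  then have "(of_nat (2*n+1) :: 'a) = 0" by (simp add: field_simps)
  then show False by (simp only: of_nat_eq_0_iff)
qed

lemma fact_double_Suc: "(fact (2*(n+1)) :: 'a::field_char_0) = fact (2*n) * (of_nat (2*n) + 1) * (of_nat (2*n) + 2)"
proof -
  have "2*(n+1) = Suc (Suc (2*n))" by simp
  then show ?thesis by (simp only: fact_Suc) (simp add: algebra_simps)
qed

lemma pochhammer_add_2:
  "pochhammer x (n+2) = pochhammer x n * ((x + of_nat n) * (x + of_nat n + 1))"
  by (simp add: pochhammer_product' pochhammer_Suc numeral_2_eq_2 algebra_simps)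

lemma pochhammer_double_product:
  fixes c :: "'a::field_char_0"
  shows "pochhammer (2*c) n * pochhammer (2*c + of_nat n) n = 4^n * pochhammer c n * pochhammer (c + 1/2) n"
  using pochhammer_double[of c n] pochhammer_product'[of "2*c" n n]
  by (simp add: mult_2 [of n, symmetric] power_mult)

lemma sum_inverse_pochhammer_convolution:
  fixes a b :: "'a::field_char_0"
  assumes a: "\<And>n. pochhammer a n \<noteq> 0" and b: "\<And>n. pochhammer b n \<noteq> 0"
  shows "(\<Sum>p\<le>n. 1 / (fact p * pochhammer a p) * (1 / (fact (n-p) * pochhammer b (n-p))))
       = pochhammer (a + b + of_nat n - 1) n / (fact n * pochhammer a n * pochhammer b n)"
proof -
  have "1 / (fact p * pochhammer a p) * (1 / (fact (n-p) * pochhammer b (n-p)))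
      = ((b + of_nat n - 1) gchoose p) * ((a + of_nat n - 1) gchoose (n-p)) / (pochhammer a n * pochhammer b n)"
    if "p \<le> n" for p
  proof -
    have binomials: "(a + of_nat n - 1) gchoose (n-p) = pochhammer (a + of_nat p) (n-p) / fact (n-p)"
      "(b + of_nat n - 1) gchoose p = pochhammer (b + of_nat (n-p)) p / fact p"
      unfolding gbinomial_pochhammer' using that by (simp_all add: of_nat_diff algebra_simps)
    have products: "pochhammer a n = pochhammer a p * pochhammer (a + of_nat p) (n-p)"
      "pochhammer b n = pochhammer b (n-p) * pochhammer (b + of_nat (n-p)) p"
      using pochhammer_product[of p n a] pochhammer_product[of "n-p" n b] that by simp_all
    show ?thesis
      unfolding binomials products using a[of p] b[of "n-p"] a[of n] b[of n] products
      by (simp add: field_simps)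
  qed
  then have "(\<Sum>p\<le>n. 1 / (fact p * pochhammer a p) * (1 / (fact (n-p) * pochhammer b (n-p))))
      = (\<Sum>p\<le>n. ((b + of_nat n - 1) gchoose p) * ((a + of_nat n - 1) gchoose (n-p)))
        / (pochhammer a n * pochhammer b n)"
    unfolding sum_divide_distrib by (intro sum.cong) auto
  also have "(\<Sum>p\<le>n. ((b + of_nat n - 1) gchoose p) * ((a + of_nat n - 1) gchoose (n-p)))
      = (b + of_nat n - 1 + (a + of_nat n - 1)) gchoose n"
    using gbinomial_Vandermonde[of "b + of_nat n - 1" "a + of_nat n - 1" n] by (simp add: atMost_atLeast0)
  also have "\<dots> = pochhammer (a + b + of_nat n - 1) n / fact n"
    unfolding gbinomial_pochhammer' by (simp add: algebra_simps)
  finally show ?thesis by (simp add: field_simps)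
qed

lemma Gamma_add_of_nat: "x \<notin> \<int>\<^sub>\<le>\<^sub>0 \<Longrightarrow> Gamma (x + of_nat n) = Gamma x * pochhammer x n"
  using pochhammer_Gamma[of x n] Gamma_nonzero[of x] by (simp add: field_simps)

lemma not_nonpos_Int_if_shifts_nonzero:
  assumes "\<And>n. x + of_nat n \<noteq> 0"
  shows "x \<notin> \<int>\<^sub>\<le>\<^sub>0"
proof
  assume "x \<in> \<int>\<^sub>\<le>\<^sub>0"
  then obtain n where "x = - of_nat n" by (elim nonpos_Ints_cases')
  with assms[of n] show False by simp
qed

section \<open>Hankel factorization from a three-term recurrence\<close>

lemma three_term_recurrence_symmetric:
  fixes G :: "nat \<Rightarrow> nat \<Rightarrow> 'a::comm_ring_1" and W \<beta> \<gamma> :: "nat \<Rightarrow> 'a"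
  assumes rec: "\<And>p L. G (p+1) L = (if L = 0 then 0 else G p (L-1)) + \<beta> L * G p L + \<gamma> L * G p (L+1)"
    and W_Suc: "\<And>L. W (L+1) = \<gamma> L * W L"
    and lower: "\<And>p L. p < L \<Longrightarrow> G p L = 0"
    and "p < K" "q < K"
  shows "(\<Sum>L\<le>K. W L * G (p+1) L * G q L) = (\<Sum>L\<le>K. W L * G p L * G (q+1) L)"
proof -
  define S where "S p q = (\<Sum>L<K. \<gamma> L * W L * (G q (L+1) * G p L + G p (L+1) * G q L))
    + (\<Sum>L\<le>K. W L * \<beta> L * G p L * G q L)" for p q
  have expand: "(\<Sum>L\<le>K. W L * G (p+1) L * G q L) = S p q" if "p < K" "q < K" for p q
  proof -
    have "(\<Sum>L\<le>K. W L * G (p+1) L * G q L) =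
        (\<Sum>L\<le>K. W L * G q L * (if L = 0 then 0 else G p (L-1)))
        + (\<Sum>L\<le>K. W L * \<beta> L * G p L * G q L) + (\<Sum>L\<le>K. W L * \<gamma> L * G p (L+1) * G q L)"
      unfolding rec by (simp add: sum.distrib algebra_simps)
    also have "(\<Sum>L\<le>K. W L * G q L * (if L = 0 then 0 else G p (L-1))) = (\<Sum>L<K. \<gamma> L * W L * G q (L+1) * G p L)"
      unfolding atMost_Suc_eq_insert_0 lessThan_Suc_atMost[symmetric] sum.lessThan_Suc_shift
      using W_Suc by (simp add: algebra_simps)
    also have "(\<Sum>L\<le>K. W L * \<gamma> L * G p (L+1) * G q L) = (\<Sum>L<K. \<gamma> L * W L * G p (L+1) * G q L)"
      unfolding lessThan_Suc_atMost[symmetric] using lower[of p "K+1"] that by (simp add: algebra_simps)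
    finally show ?thesis unfolding S_def by (simp add: sum.distrib algebra_simps)
  qed
  have "(\<Sum>L\<le>K. W L * G p L * G (q+1) L) = (\<Sum>L\<le>K. W L * G (q+1) L * G p L)"
    by (simp add: algebra_simps)
  also have "\<dots> = S q p" using expand assms by simp
  also have "\<dots> = S p q" unfolding S_def by (simp add: algebra_simps)
  finally show ?thesis using expand assms by simp
qed

text \<open>
  Read G p L as the coefficient of P L in x^p, where the monic polynomials P L satisfy
  x P L = P (L+1) + \<beta> L P L + \<gamma> (L-1) P (L-1); then W L is the squared norm of P L.
\<close>

lemma hankel_factorization:
  fixes G :: "nat \<Rightarrow> nat \<Rightarrow> 'a::comm_ring_1" and W \<beta> \<gamma> M :: "nat \<Rightarrow> 'a"
  assumes rec: "\<And>p L. G (p+1) L = (if L = 0 then 0 else G p (L-1)) + \<beta> L * G p L + \<gamma> L * G p (L+1)"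
    and W_Suc: "\<And>L. W (L+1) = \<gamma> L * W L"
    and lower: "\<And>p L. p < L \<Longrightarrow> G p L = 0"
    and "W 0 = 1" "G 0 0 = 1" and first_column: "\<And>p. G p 0 = M p"
  shows "p \<le> N \<Longrightarrow> (\<Sum>L\<le>N. W L * G p L * G q L) = M (p + q)"
proof (induction q arbitrary: p N)
  case 0
  then show ?case
    using lower[of 0] assms(4,5) first_column by (simp add: atMost_atLeast0 sum.atLeast_Suc_atMost)
next
  case (Suc q)
  define K where "K = N + p + q + 2"
  have "(\<Sum>L\<le>N. W L * G p L * G (q+1) L) = (\<Sum>L\<le>K. W L * G p L * G (q+1) L)"
    by (rule sum.mono_neutral_left) (use Suc.prems lower in \<open>auto simp: K_def\<close>)
  also have "\<dots> = (\<Sum>L\<le>K. W L * G (p+1) L * G q L)"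
    by (rule three_term_recurrence_symmetric[where G=G and W=W and \<beta>=\<beta> and \<gamma>=\<gamma>,
          OF rec W_Suc lower, symmetric])
       (auto simp: K_def)
  also have "\<dots> = M (p + 1 + q)" by (rule Suc.IH) (simp add: K_def)
  finally show ?case by simp
qed

section \<open>Orthogonal polynomials for the moments of a beta distribution\<close>

definition hankel_lower :: "complex \<Rightarrow> nat \<Rightarrow> nat \<Rightarrow> complex" where
  "hankel_lower c p L =
     (if L \<le> p then fact (2*p) / (fact (2*L) * 16^(p-L) * pochhammer (c + of_nat (2*L)) (p-L) * fact (p-L))
      else 0)"

lemma hankel_lower_diag [simp]: "hankel_lower c L L = 1"
  by (simp add: hankel_lower_def)

lemma hankel_lower_above_diag: "p < L \<Longrightarrow> hankel_lower c p L = 0"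
  by (simp add: hankel_lower_def)

lemma hankel_lower_below_diag:
  "hankel_lower c (L+m) L = fact (2*(L+m)) / (fact (2*L) * 16^m * pochhammer (c + of_nat (2*L)) m * fact m)"
  by (simp add: hankel_lower_def)

lemma hankel_lower_next_row:
  fixes c :: complex and L m :: nat
  assumes c: "\<And>n. c + of_nat n \<noteq> 0"
  defines "x \<equiv> 2 * of_nat L + c" and "l \<equiv> of_nat L" and "k \<equiv> of_nat m"
  shows "hankel_lower c (L+m+1) L
           = hankel_lower c (L+m) L * ((2*(l+k)+1) * (2*(l+k)+2) / (16 * (x+k) * (k+1)))"
proof -
  have "pochhammer x m \<noteq> 0" "x + k \<noteq> 0"
    using pochhammer_shift_nonzero[OF c, of "2*L" m] c[of "2*L+m"] by (simp_all add: x_def k_def add_ac)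
  moreover have "k + 1 \<noteq> 0" unfolding k_def by (rule of_nat_shift_neq_0)
  ultimately show ?thesis
    using hankel_lower_below_diag[of c L "m+1"] fact_double_Suc[of "L+m", where 'a=complex]
    by (simp add: hankel_lower_below_diag pochhammer_Suc x_def l_def k_def add_ac field_simps)
qed

lemma hankel_lower_next_column:
  fixes c :: complex and L m :: nat
  assumes c: "\<And>n. c + of_nat n \<noteq> 0"
  defines "x \<equiv> 2 * of_nat L + c" and "l \<equiv> of_nat L" and "k \<equiv> of_nat m"
  shows "hankel_lower c (L+m) (L+1)
           = hankel_lower c (L+m) L * (16 * k * x * (x+1) / ((2*l+1) * (2*l+2) * (x+k)))"
proof (cases m)
  case 0
  then show ?thesis by (simp add: hankel_lower_above_diag k_def)
next
  case (Suc j)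
  have nz: "pochhammer (x+2) j \<noteq> 0" "x \<noteq> 0" "x + 1 \<noteq> 0" "x + k \<noteq> 0"
    using pochhammer_shift_nonzero[OF c, of "2*L+2" j] c[of "2*L"] c[of "2*L+1"] c[of "2*L+m"]
    by (simp_all add: x_def k_def add_ac)
  have "pochhammer x (Suc j) * (x + k) = pochhammer x (Suc (Suc j))"
    by (simp only: pochhammer_Suc[of x "Suc j"] Suc k_def)
  also have "\<dots> = x * (x+1) * pochhammer (x+2) j"
    by (simp add: pochhammer_rec add.assoc one_add_one)
  finally have P: "pochhammer x m = x * (x+1) * pochhammer (x+2) j / (x + k)"
    using nz by (simp add: Suc field_simps)
  define F where "F = (fact (2*(L+m)) :: complex)"
  define D where "D = fact (2*L) * 16^j * (fact j :: complex)"
  define Q where "Q = (2*l+1) * (2*l+2)"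
  have next_col: "hankel_lower c (L+m) (L+1) = F / (D * Q * pochhammer (x+2) j)"
    using hankel_lower_below_diag[of c "L+1" j] fact_double_Suc[of L, where 'a=complex]
    by (simp add: Suc F_def D_def Q_def x_def l_def algebra_simps)
  have col: "hankel_lower c (L+m) L = F / (D * (16 * k) * pochhammer x m)"
    using hankel_lower_below_diag[of c L m] by (simp add: Suc F_def D_def x_def k_def algebra_simps)
  have "Q \<noteq> 0" "D \<noteq> 0"
    unfolding l_def Q_def D_def using of_nat_shift_neq_0[where 'a=complex] by simp_all
  moreover have "k \<noteq> 0" unfolding k_def Suc by (rule of_nat_neq_0)
  ultimately have "F / (D * (16 * k) * pochhammer x m) * (16 * k * x * (x+1) / (Q * (x+k)))
      = F / (D * Q * pochhammer (x+2) j)"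
    using nz by (simp add: P divide_simps)
  then show ?thesis unfolding Q_def[symmetric] col next_col by (rule sym)
qed

lemma hankel_lower_prev_column:
  fixes c :: complex and L m :: nat
  assumes c: "\<And>n. c + of_nat n \<noteq> 0" and "0 < L"
  defines "x \<equiv> 2 * of_nat L + c" and "l \<equiv> of_nat L" and "k \<equiv> of_nat m"
  shows "hankel_lower c (L+m) (L-1)
           = hankel_lower c (L+m) L * ((2*l-1) * (2*l) * (x+k-1) / (16 * (k+1) * (x-2) * (x-1)))"
proof -
  obtain j where L: "L = Suc j" using \<open>0 < L\<close> gr0_implies_Suc by blast
  have "x - 2 \<noteq> 0" "x - 1 \<noteq> 0"
    using c[of "2*j"] c[of "2*j+1"] by (simp_all add: x_def L algebra_simps)
  moreover have "2*l-1 \<noteq> 0" "2*l \<noteq> 0" "k + 1 \<noteq> 0"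
    using of_nat_shift_neq_0[of j, where 'a=complex] of_nat_shift_neq_0[of m, where 'a=complex]
    by (simp_all add: l_def k_def L algebra_simps)
  moreover have "x + k - 1 \<noteq> 0"
    using c[of "2*j+1+m"] by (simp add: x_def k_def L algebra_simps)
  ultimately have r: "16 * (k+1) * (x-2) * (x-1) / ((2*l-1) * (2*l) * (x+k-1)) \<noteq> 0"
    by (simp only: divide_eq_0_iff mult_eq_0_iff de_Morgan_disj) simp
  have "hankel_lower c (L+m) L = hankel_lower c (L+m) j
      * (16 * (k+1) * (x-2) * (x-1) / ((2*l-1) * (2*l) * (x+k-1)))"
    using hankel_lower_next_column[OF c, of j "Suc m"]
    by (simp add: L x_def l_def k_def algebra_simps)
  with r show ?thesis by (simp add: L)
qed

definition jacobi_beta :: "complex \<Rightarrow> complex \<Rightarrow> complex" where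
  "jacobi_beta c l = (4 - (2*l) * (2*l-1) / ((2*l+c-2) * (2*l+c-1))
                        - (2*l+2*c-1) * (2*l+2*c-2) / ((2*l+c) * (2*l+c-1))) / 16"

definition jacobi_gamma :: "complex \<Rightarrow> complex \<Rightarrow> complex" where
  "jacobi_gamma c l = (2*l+1) * (2*l+2) * (2*l+2*c-2) * (2*l+2*c-1)
                        / (256 * (2*l+c+1) * (2*l+c-1) * (2*l+c)^2)"

lemma jacobi_ratio_identity:
  fixes c l k :: complex
  defines "x \<equiv> 2*l + c"
  assumes nz: "x + k \<noteq> 0" "k + 1 \<noteq> 0" "x - 2 \<noteq> 0" "x - 1 \<noteq> 0" "x \<noteq> 0" "x + 1 \<noteq> 0"
    "2*l + 1 \<noteq> 0" "2*l + 2 \<noteq> 0"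
  shows "(2*(l+k)+1) * (2*(l+k)+2) / (16 * (x+k) * (k+1))
           = (2*l-1) * (2*l) * (x+k-1) / (16 * (k+1) * (x-2) * (x-1)) + jacobi_beta c l
             + jacobi_gamma c l * (16 * k * x * (x+1) / ((2*l+1) * (2*l+2) * (x+k)))"
proof -
  have inv: "\<And>y::complex. y \<noteq> 0 \<Longrightarrow> y * inverse y = 1" by simp
  show ?thesis
    using nz[unfolded x_def, THEN inv]
    unfolding jacobi_beta_def jacobi_gamma_def x_def divide_inverse inverse_mult_distrib power2_eq_square
    by algebra
qed

lemma jacobi_ratio_identity_0:
  fixes c k :: complex
  assumes nz: "c + k \<noteq> 0" "k + 1 \<noteq> 0" "c - 1 \<noteq> 0" "c \<noteq> 0" "c + 1 \<noteq> 0"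
  shows "(2*k+1) * (2*k+2) / (16 * (c+k) * (k+1))
           = jacobi_beta c 0 + jacobi_gamma c 0 * (16 * k * c * (c+1) / (2 * (c+k)))"
proof -
  have inv: "\<And>y::complex. y \<noteq> 0 \<Longrightarrow> y * inverse y = 1" by simp
  show ?thesis
    using nz[THEN inv]
    unfolding jacobi_beta_def jacobi_gamma_def divide_inverse inverse_mult_distrib power2_eq_square
    by algebra
qed

lemma hankel_lower_recurrence:
  assumes c: "\<And>n. c + of_nat n \<noteq> 0" and "c \<noteq> 1"
  shows "hankel_lower c (p+1) L = (if L = 0 then 0 else hankel_lower c p (L-1))
           + jacobi_beta c (of_nat L) * hankel_lower c p L
           + jacobi_gamma c (of_nat L) * hankel_lower c p (L+1)"
proof (cases "L \<le> p")
  case False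
  then consider "p + 1 < L" | "L = p + 1" by linarith
  then show ?thesis by cases (simp_all add: hankel_lower_above_diag)
next
  case True
  then obtain m where p: "p = L + m" using le_Suc_ex by blast
  define l where "l = (of_nat L :: complex)"
  define x where "x = 2 * l + c"
  define k where "k = (of_nat m :: complex)"
  define g where "g = hankel_lower c p L"
  have nz: "x + k \<noteq> 0" "k + 1 \<noteq> 0" "x \<noteq> 0" "x + 1 \<noteq> 0" "2*l + 1 \<noteq> 0" "2*l + 2 \<noteq> 0"
    using c[of "2*L+m"] c[of "2*L"] c[of "2*L+1"] of_nat_shift_neq_0[where 'a=complex]
    by (simp_all add: x_def k_def l_def add_ac)
  have x1: "x - 1 \<noteq> 0"
    using \<open>c \<noteq> 1\<close> c[of "2*L-1"] by (cases L) (simp_all add: x_def l_def algebra_simps)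
  define \<rho>\<^sub>r where "\<rho>\<^sub>r = (2*(l+k)+1) * (2*(l+k)+2) / (16 * (x+k) * (k+1))"
  define \<rho>\<^sub>c where "\<rho>\<^sub>c = 16 * k * x * (x+1) / ((2*l+1) * (2*l+2) * (x+k))"
  have row: "hankel_lower c (p+1) L = g * \<rho>\<^sub>r"
    using hankel_lower_next_row[OF c, of L m] by (simp add: g_def \<rho>\<^sub>r_def x_def l_def k_def p)
  have col: "hankel_lower c p (L+1) = g * \<rho>\<^sub>c"
    unfolding g_def \<rho>\<^sub>c_def p x_def l_def k_def by (rule hankel_lower_next_column[OF c])
  show ?thesis
  proof (cases "L = 0")
    case True
    have "\<rho>\<^sub>r = jacobi_beta c l + jacobi_gamma c l * \<rho>\<^sub>c"
      using jacobi_ratio_identity_0[of c k] nz x1 True by (simp add: x_def l_def \<rho>\<^sub>r_def \<rho>\<^sub>c_def)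
    with row col True show ?thesis
      by (simp add: g_def l_def algebra_simps)
  next
    case False
    define \<rho>\<^sub>p where "\<rho>\<^sub>p = (2*l-1) * (2*l) * (x+k-1) / (16 * (k+1) * (x-2) * (x-1))"
    have prev: "hankel_lower c p (L-1) = g * \<rho>\<^sub>p"
      unfolding g_def \<rho>\<^sub>p_def p x_def l_def k_def
      by (rule hankel_lower_prev_column[OF c]) (use False in simp)
    have "x - 2 \<noteq> 0"
      using c[of "2*L-2"] False by (simp add: x_def l_def algebra_simps of_nat_diff)
    then have "\<rho>\<^sub>r = \<rho>\<^sub>p + jacobi_beta c l + jacobi_gamma c l * \<rho>\<^sub>c"
      using jacobi_ratio_identity[of l c k] nz x1 by (simp add: x_def \<rho>\<^sub>r_def \<rho>\<^sub>p_def \<rho>\<^sub>c_def)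
    with row col prev False show ?thesis
      by (simp add: g_def l_def algebra_simps)
  qed
qed

definition hankel_diag :: "complex \<Rightarrow> nat \<Rightarrow> complex" where
  "hankel_diag c L = fact (2*L) * pochhammer (2*c-2) (2*L)
                       / (256^L * pochhammer (c-1) (2*L) * pochhammer c (2*L))"

definition moment :: "complex \<Rightarrow> nat \<Rightarrow> complex" where
  "moment c n = pochhammer (1/2) n / (4^n * pochhammer c n)"

lemma hankel_diag_0 [simp]: "hankel_diag c 0 = 1"
  by (simp add: hankel_diag_def)

lemma hankel_diag_Suc:
  assumes c: "\<And>n. c - 1 + of_nat n \<noteq> 0"
  shows "hankel_diag c (L+1) = jacobi_gamma c (of_nat L) * hankel_diag c L"
proof -
  define l where "l = (of_nat L :: complex)"
  have "pochhammer (c-1) (2*L) \<noteq> 0" "pochhammer c (2*L) \<noteq> 0"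
    using pochhammer_shift_nonzero[OF c, of 0 "2*L"] pochhammer_shift_nonzero[OF c, of 1 "2*L"] by simp_all
  moreover have "2*l+c-1 \<noteq> 0" "2*l+c \<noteq> 0" "2*l+c+1 \<noteq> 0"
    using c[of "2*L"] c[of "2*L+1"] c[of "2*L+2"] by (simp_all add: l_def algebra_simps)
  moreover have "2*(L+1) = 2*L+2" by simp
  ultimately show ?thesis
    unfolding hankel_diag_def jacobi_gamma_def
    by (simp only: pochhammer_add_2 fact_double_Suc) (simp add: l_def field_simps power2_eq_square)
qed

lemma hankel_lower_first_column:
  assumes c: "\<And>n. c + of_nat n \<noteq> 0"
  shows "hankel_lower c p 0 = moment c p"
proof -
  have "pochhammer c p \<noteq> 0" using pochhammer_shift_nonzero[OF c, of 0 p] by simp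
  moreover have "(2::complex) ^ (2*p) = 4^p" "(16::complex)^p = 4^p * 4^p"
    by (simp_all add: power_mult flip: power_mult_distrib)
  ultimately show ?thesis
    unfolding hankel_lower_def moment_def fact_double by (simp add: field_simps)
qed

lemma moment_hankel_factorization:
  assumes c: "\<And>n. c - 1 + of_nat n \<noteq> 0" and "p \<le> N"
  shows "(\<Sum>L\<le>N. hankel_diag c L * hankel_lower c p L * hankel_lower c q L) = moment c (p + q)"
proof -
  have c': "c + of_nat n \<noteq> 0" for n using c[of "n+1"] by (simp add: algebra_simps)
  have "c \<noteq> 1" using c[of 0] by simp
  show ?thesis
  proof (rule hankel_factorization)
    show "hankel_lower c (p+1) L = (if L = 0 then 0 else hankel_lower c p (L-1))
           + jacobi_beta c (of_nat L) * hankel_lower c p L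
           + jacobi_gamma c (of_nat L) * hankel_lower c p (L+1)" for p L
      by (rule hankel_lower_recurrence[OF c' \<open>c \<noteq> 1\<close>])
    show "hankel_diag c (L+1) = jacobi_gamma c (of_nat L) * hankel_diag c L" for L
      by (rule hankel_diag_Suc[OF c])
  qed (use assms c' in \<open>simp_all add: hankel_lower_above_diag hankel_lower_first_column\<close>)
qed

lemma hankel_diag_altdef:
  assumes c: "\<And>n. 2*c - 2 + of_nat n \<noteq> 0"
  shows "hankel_diag c L = (c-1) * 16^L * (pochhammer (c - 1/2) (2*L))^2 * pochhammer (2*c-2) (2*L)
           * (pochhammer (1/2) L * fact L)^2
           / (fact (2*L) * (2 * of_nat L + c - 1) * (pochhammer (2*c-2) (4*L))^2)"
proof -
  define A where "A = pochhammer (c - 1/2) (2*L)"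
  define B where "B = pochhammer (c - 1) (2*L)"
  define C where "C = pochhammer c (2*L)"
  define d where "d = 2 * of_nat L + c - 1"
  have "(2::complex) ^ (2 * (2*L)) = 16^L" unfolding power_mult by simp
  then have P4: "pochhammer (2*c-2) (4*L) = 16^L * B * A"
    using pochhammer_double[of "c-1" "2*L"] by (simp add: A_def B_def algebra_simps)
  have F: "pochhammer (1/2) L * fact L = fact (2*L) / (4^L :: complex)"
    using fact_double[of L, where 'a=complex] by (simp add: power_mult)
  have Q: "(16::complex)^L = 4^L * 4^L" "(256::complex)^L = 4^L * 4^L * 4^L * 4^L"
    by (simp_all flip: power_mult_distrib)
  have shift: "x + of_nat j \<noteq> 0" if "2 * (x + of_nat j) = 2*c - 2 + of_nat n" for x :: complex and j n
    using c[of n] that by (metis mult_zero_right)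
  have "c - 1/2 + of_nat j \<noteq> 0" "c - 1 + of_nat j \<noteq> 0" "c + of_nat j \<noteq> 0" for j
    by (rule shift[where n="2*j+1"], simp add: algebra_simps, rule shift[where n="2*j"], simp add: algebra_simps,
        rule shift[where n="2*j+2"], simp add: algebra_simps)
  then have "c - 1 \<noteq> 0" "A \<noteq> 0" "B \<noteq> 0" "C \<noteq> 0"
    unfolding A_def B_def C_def using pochhammer_shift_nonzero[of _ 0] by fastforce+
  have "B * d = pochhammer (c-1) (Suc (2*L))"
    by (simp add: B_def d_def pochhammer_Suc algebra_simps)
  also have "\<dots> = (c-1) * C" by (simp add: C_def pochhammer_rec)
  finally have D: "d = (c-1) * C / B" using \<open>B \<noteq> 0\<close> by (simp add: field_simps)
  show ?thesis
    unfolding hankel_diag_def A_def[symmetric] B_def[symmetric] C_def[symmetric] d_def[symmetric] P4 F D Q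
    using \<open>c - 1 \<noteq> 0\<close> \<open>A \<noteq> 0\<close> \<open>B \<noteq> 0\<close> \<open>C \<noteq> 0\<close>
    by (simp add: field_simps power2_eq_square)
qed

lemma hankel_diag_altdef_half_sum:
  fixes \<mu> \<nu> :: complex
  assumes \<mu>\<nu>: "\<And>n. \<mu> + \<nu> - 1 + of_nat n \<noteq> 0"
  shows "hankel_diag (\<mu>/2 + \<nu>/2 + 1/2) L
    = (\<mu> + \<nu> - 1) / 2 * 16^L * (pochhammer (\<mu> / 2 + \<nu> / 2) (2 * L))^2 * pochhammer (\<mu> + \<nu> - 1) (2 * L)
      * (pochhammer (1/2) L * fact L)^2
      / (fact (2*L) * (2 * of_nat L + \<mu> / 2 + \<nu> / 2 - 1 / 2)
         * (pochhammer (\<mu> + \<nu> - 1) (2 * L) * pochhammer (2 * of_nat L + \<mu> + \<nu> - 1) (2 * L))^2)"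
proof -
  define c where "c = \<mu>/2 + \<nu>/2 + 1/2"
  have "2*c - 2 + of_nat n \<noteq> 0" for n using \<mu>\<nu>[of n] by (simp add: c_def algebra_simps)
  note diag = hankel_diag_altdef[of c L, OF this]
  have c: "2 * of_nat L + c - 1 = 2 * of_nat L + \<mu> / 2 + \<nu> / 2 - 1 / 2" "2*c - 2 = \<mu> + \<nu> - 1"
    "c - 1/2 = \<mu>/2 + \<nu>/2" "c - 1 = (\<mu> + \<nu> - 1) / 2"
    by (simp_all add: c_def algebra_simps)
  have "pochhammer (\<mu> + \<nu> - 1) (4*L)
      = pochhammer (\<mu> + \<nu> - 1) (2 * L) * pochhammer (2 * of_nat L + \<mu> + \<nu> - 1) (2 * L)"
    using pochhammer_product'[of "\<mu> + \<nu> - 1" "2*L" "2*L"] by (simp add: mult_2 [symmetric] algebra_simps)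
  with diag show ?thesis unfolding c c_def[symmetric] by simp
qed

section \<open>Growth bounds\<close>

lemma norm_add_of_nat_ge_linear:
  fixes c :: "'a::real_normed_algebra_1"
  assumes c: "\<And>n. c + of_nat n \<noteq> 0"
  obtains k where "k > 0" "\<And>n. k * (real n + 1) \<le> norm (c + of_nat n)"
proof
  define N where "N = nat \<lceil>2 * norm c\<rceil> + 1"
  define k where "k = min (1/2) (Min ((\<lambda>n. norm (c + of_nat n) / (real n + 1)) ` {..<N}))"
  have "0 < Min ((\<lambda>n. norm (c + of_nat n) / (real n + 1)) ` {..<N})"
    using c by (subst Min_gr_iff) (auto simp: N_def)
  then show "k > 0" by (simp add: k_def)
  show "k * (real n + 1) \<le> norm (c + of_nat n)" for n
  proof (cases "n < N")
    case True
    then have "k \<le> norm (c + of_nat n) / (real n + 1)"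
      unfolding k_def by (intro min.coboundedI2 Min_le) auto
    then show ?thesis by (simp add: field_simps)
  next
    case False
    then have "2 * norm c + 1 \<le> real n" unfolding N_def by linarith
    moreover have "real n - norm c \<le> norm (c + of_nat n)"
      using norm_triangle_ineq4[of "c + of_nat n" c] by (simp add: norm_of_nat)
    moreover have "k * (real n + 1) \<le> 1/2 * (real n + 1)"
      by (intro mult_right_mono) (simp_all add: k_def)
    ultimately show ?thesis by argo
  qed
qed

lemma norm_pochhammer_ge:
  fixes c :: "'a::real_normed_field"
  assumes "k \<ge> 0" and c: "\<And>n. k * (real n + 1) \<le> norm (c + of_nat n)"
  shows "k^m * (fact (j+m) / fact j) \<le> norm (pochhammer (c + of_nat j) m)"
proof (induction m)
  case (Suc m)
  have "k^(Suc m) * (fact (j + Suc m) / fact j) = (k^m * (fact (j+m) / fact j)) * (k * (real (j+m) + 1))"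
    by (simp add: algebra_simps)
  also have "\<dots> \<le> norm (pochhammer (c + of_nat j) m) * norm (c + of_nat (j+m))"
    using Suc.IH c[of "j+m"] \<open>k \<ge> 0\<close> by (intro mult_mono) auto
  also have "\<dots> = norm (pochhammer (c + of_nat j) (Suc m))"
    by (simp add: pochhammer_Suc norm_mult add.assoc)
  finally show ?case .
qed simp

lemma norm_inverse_fact_pochhammer_le:
  fixes c :: "'a::real_normed_field"
  assumes c: "\<And>n. c + of_nat n \<noteq> 0"
  obtains r where "r \<ge> 0" "\<And>p. norm (1 / (fact p * pochhammer c p)) \<le> r^p / fact p"
proof -
  obtain k where "k > 0" and k: "\<And>n. k * (real n + 1) \<le> norm (c + of_nat n)"
    using norm_add_of_nat_ge_linear[OF c] by blast
  have "norm (1 / (fact p * pochhammer c p)) \<le> (1/k)^p / fact p" for p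
  proof -
    have le: "k^p * fact p \<le> norm (pochhammer c p)"
      using norm_pochhammer_ge[of k c p 0] k \<open>k > 0\<close> by simp
    have pos: "0 < k^p * fact p" using \<open>k > 0\<close> by simp
    with le have "0 < norm (pochhammer c p)" by linarith
    have "norm (1 / (fact p * pochhammer c p)) = 1 / (fact p * norm (pochhammer c p))"
      by (simp add: norm_divide norm_mult)
    also have "\<dots> \<le> 1 / (fact p * (k^p * fact p))"
      using le pos \<open>0 < norm (pochhammer c p)\<close> \<open>k > 0\<close>
      by (intro divide_left_mono mult_left_mono mult_pos_pos) auto
    also have "\<dots> \<le> 1 / (k^p * fact p)"
      using pos by (intro divide_left_mono) (auto simp: mult_le_cancel_right1)
    finally show ?thesis by (simp add: power_one_over)
  qed
  with \<open>k > 0\<close> show ?thesis using that[of "1/k"] by simp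
qed

lemma norm_linear_ratio_bounded:
  fixes u v :: "'a::real_normed_field"
  assumes v: "\<And>n. v + of_nat n \<noteq> 0"
  obtains B where "B \<ge> 0" "\<And>n. norm ((of_nat n + u) / (of_nat n + v)) \<le> B"
proof -
  obtain k where "k > 0" and k: "\<And>n. k * (real n + 1) \<le> norm (v + of_nat n)"
    using norm_add_of_nat_ge_linear[OF v] by blast
  have "norm ((of_nat n + u) / (of_nat n + v)) \<le> (1 + norm u) / k" for n
  proof -
    have "norm (of_nat n + u) \<le> real n + norm u"
      using norm_triangle_ineq[of "of_nat n" u] by (simp add: norm_of_nat)
    also have "\<dots> \<le> (1 + norm u) * (real n + 1)" by (simp add: algebra_simps)
    finally have "norm (of_nat n + u) \<le> (1 + norm u) * (real n + 1)" .
    moreover have "k * (real n + 1) \<le> norm (of_nat n + v)" using k[of n] by (simp add: add.commute)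
    ultimately have "norm (of_nat n + u) / norm (of_nat n + v) \<le> (1 + norm u) * (real n + 1) / (k * (real n + 1))"
      using \<open>k > 0\<close> by (intro frac_le) auto
    then show ?thesis by (simp add: norm_divide)
  qed
  with \<open>k > 0\<close> show ?thesis using that[of "(1 + norm u) / k"] by simp
qed

lemma norm_hankel_lower_le:
  assumes c: "\<And>n. c + of_nat n \<noteq> 0"
  obtains R where "R \<ge> 1" "\<And>p L. norm (hankel_lower c p L) \<le> R^p"
proof -
  obtain k where "k > 0" and k: "\<And>n. k * (real n + 1) \<le> norm (c + of_nat n)"
    using norm_add_of_nat_ge_linear[OF c] by blast
  define Q where "Q = max 1 (1/(16*k))"
  have "Q \<ge> 1" by (simp add: Q_def)
  have "norm (hankel_lower c p L) \<le> (4*Q)^p" for p L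
  proof (cases "L \<le> p")
    case False
    then show ?thesis using \<open>Q \<ge> 1\<close> by (simp add: hankel_lower_above_diag)
  next
    case True
    then obtain m where p: "p = L + m" using le_Suc_ex by blast
    define P where "P = norm (pochhammer (c + of_nat (2*L)) m)"
    have P_ge: "k^m * (fact (2*L+m) / fact (2*L)) \<le> P"
      unfolding P_def using \<open>k > 0\<close> k by (intro norm_pochhammer_ge) auto
    moreover have "0 < k^m * (fact (2*L+m) / fact (2*L))" using \<open>k > 0\<close> by simp
    ultimately have "0 < P" by linarith
    have "norm (hankel_lower c p L) = fact (2*(L+m)) / (fact (2*L) * 16^m * P * fact m)"
      unfolding p hankel_lower_below_diag P_def by (simp add: norm_divide norm_mult norm_power)
    also have "\<dots> \<le> fact (2*(L+m)) / (fact (2*L) * 16^m * (k^m * (fact (2*L+m) / fact (2*L))) * fact m)"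
      using P_ge \<open>0 < P\<close> \<open>k > 0\<close> by (intro divide_left_mono mult_right_mono mult_left_mono mult_pos_pos) auto
    also have "\<dots> = real (2*(L+m) choose m) * (1/(16*k))^m"
      using \<open>k > 0\<close> by (simp add: binomial_fact field_simps power_mult_distrib power_one_over)
    also have "\<dots> \<le> 4^p * Q^p"
    proof (intro mult_mono)
      have "real (2*(L+m) choose m) \<le> 2^(2*(L+m))"
        by (metis binomial_le_pow2 of_nat_le_iff of_nat_numeral of_nat_power)
      also have "\<dots> = 4^p" unfolding p power_mult by simp
      finally show "real (2*(L+m) choose m) \<le> 4^p" .
      have "(1/(16*k))^m \<le> Q^m" using \<open>k > 0\<close> by (intro power_mono) (auto simp: Q_def)
      also have "\<dots> \<le> Q^p" using \<open>Q \<ge> 1\<close> by (intro power_increasing) (auto simp: p)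
      finally show "(1/(16*k))^m \<le> Q^p" .
    qed (use \<open>k > 0\<close> in auto)
    finally show ?thesis by (simp add: power_mult_distrib)
  qed
  then show ?thesis using that[of "4*Q"] \<open>Q \<ge> 1\<close> by auto
qed

lemma norm_jacobi_gamma_bounded:
  assumes c: "\<And>n. c - 1 + of_nat n \<noteq> 0"
  obtains B where "B \<ge> 1" "\<And>L. norm (jacobi_gamma c (of_nat L)) \<le> B"
proof -
  have "c + 1 + of_nat n \<noteq> 0" "c + of_nat n \<noteq> 0" for n
    using c[of "n+2"] c[of "n+1"] by (simp_all add: algebra_simps)
  then obtain B1 B2 B3 B4 where B: "B1 \<ge> 0" "B2 \<ge> 0" "B3 \<ge> 0" "B4 \<ge> 0"
    and bounds: "\<And>n. norm ((of_nat n + 1) / (of_nat n + (c+1))) \<le> B1"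
      "\<And>n. norm ((of_nat n + 2) / (of_nat n + c)) \<le> B2"
      "\<And>n. norm ((of_nat n + (2*c-2)) / (of_nat n + (c-1))) \<le> B3"
      "\<And>n. norm ((of_nat n + (2*c-1)) / (of_nat n + c)) \<le> B4"
    using norm_linear_ratio_bounded c by metis
  have "norm (jacobi_gamma c (of_nat L)) \<le> B1 * B2 * B3 * B4 / 256" for L
  proof -
    define l where "l = (of_nat (2*L) :: complex)"
    have "jacobi_gamma c (of_nat L) = ((l+1) * (l+2) * (l+(2*c-2)) * (l+(2*c-1)))
            / ((l+(c+1)) * (l+c) * (l+(c-1)) * (l+c) * 256)"
      unfolding jacobi_gamma_def l_def
      by (intro arg_cong2[where f="(/)"]) (simp_all add: power2_eq_square algebra_simps)
    also have "\<dots> = (l+1) / (l+(c+1)) * ((l+2) / (l+c)) * ((l+(2*c-2)) / (l+(c-1)))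
                      * ((l+(2*c-1)) / (l+c)) / 256"
      by (simp only: times_divide_times_eq divide_divide_eq_left)
    finally have "norm (jacobi_gamma c (of_nat L)) = norm ((l+1) / (l+(c+1))) * norm ((l+2) / (l+c))
        * norm ((l+(2*c-2)) / (l+(c-1))) * norm ((l+(2*c-1)) / (l+c)) / 256"
      by (simp add: norm_mult norm_divide)
    also have "\<dots> \<le> B1 * B2 * B3 * B4 / 256"
      unfolding l_def by (intro divide_right_mono mult_mono bounds) (simp_all add: B)
    finally show ?thesis .
  qed
  then show ?thesis using that[of "max 1 (B1 * B2 * B3 * B4 / 256)"] by (meson max.cobounded1 max.coboundedI2)
qed

lemma norm_hankel_diag_le:
  assumes c: "\<And>n. c - 1 + of_nat n \<noteq> 0"
  obtains R where "R \<ge> 1" "\<And>L. norm (hankel_diag c L) \<le> R^L"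
proof -
  obtain B where "B \<ge> 1" and B: "\<And>L. norm (jacobi_gamma c (of_nat L)) \<le> B"
    using norm_jacobi_gamma_bounded[OF c] by blast
  have "norm (hankel_diag c L) \<le> B^L" for L
  proof (induction L)
    case (Suc L)
    have "norm (hankel_diag c (Suc L)) = norm (jacobi_gamma c (of_nat L)) * norm (hankel_diag c L)"
      using hankel_diag_Suc[OF c, of L] by (simp add: norm_mult)
    also have "\<dots> \<le> B * B^L" using B Suc.IH \<open>B \<ge> 1\<close> by (intro mult_mono) auto
    finally show ?case by simp
  qed simp
  with \<open>B \<ge> 1\<close> that show ?thesis by blast
qed

lemma hankel_common_bounds:
  fixes c \<mu> \<nu> :: complex
  assumes c: "\<And>n. c - 1 + of_nat n \<noteq> 0"
    and \<mu>: "\<And>n. \<mu> + 1 + of_nat n \<noteq> 0" and \<nu>: "\<And>n. \<nu> + 1 + of_nat n \<noteq> 0"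
  obtains R r where "R \<ge> 1" "r \<ge> 0"
    "\<And>L. norm (hankel_diag c L) \<le> R^L" "\<And>p L. norm (hankel_lower c p L) \<le> R^p"
    "\<And>p. norm (1 / (fact p * pochhammer (\<mu>+1) p)) \<le> r^p / fact p"
    "\<And>p. norm (1 / (fact p * pochhammer (\<nu>+1) p)) \<le> r^p / fact p"
proof -
  have "c + of_nat n \<noteq> 0" for n using c[of "n+1"] by (simp add: algebra_simps)
  then obtain R\<^sub>1 R\<^sub>2 r\<^sub>1 r\<^sub>2 where R: "R\<^sub>1 \<ge> 1" "R\<^sub>2 \<ge> 1" "r\<^sub>1 \<ge> 0" "r\<^sub>2 \<ge> 0"
    and bounds: "\<And>L. norm (hankel_diag c L) \<le> R\<^sub>1^L" "\<And>p L. norm (hankel_lower c p L) \<le> R\<^sub>2^p"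
      "\<And>p. norm (1 / (fact p * pochhammer (\<mu>+1) p)) \<le> r\<^sub>1^p / fact p"
      "\<And>p. norm (1 / (fact p * pochhammer (\<nu>+1) p)) \<le> r\<^sub>2^p / fact p"
    using norm_hankel_diag_le[OF c] norm_hankel_lower_le norm_inverse_fact_pochhammer_le[OF \<mu>]
      norm_inverse_fact_pochhammer_le[OF \<nu>] by metis
  have max: "x^n \<le> (max x y)^n" "y^n \<le> (max x y)^n" if "x \<ge> 0" "y \<ge> 0" for x y :: real and n
    using that by (simp_all add: power_mono)
  show ?thesis
  proof (rule that[of "max R\<^sub>1 R\<^sub>2" "max r\<^sub>1 r\<^sub>2"])
    show "norm (hankel_diag c L) \<le> (max R\<^sub>1 R\<^sub>2)^L" for L
      using bounds(1)[of L] max(1)[of R\<^sub>1 R\<^sub>2 L] R by linarith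
    show "norm (hankel_lower c p L) \<le> (max R\<^sub>1 R\<^sub>2)^p" for p L
      using bounds(2)[of p L] max(2)[of R\<^sub>1 R\<^sub>2 p] R by linarith
    show "norm (1 / (fact p * pochhammer (\<mu>+1) p)) \<le> (max r\<^sub>1 r\<^sub>2)^p / fact p" for p
      using bounds(3)[of p] divide_right_mono[OF max(1)[of r\<^sub>1 r\<^sub>2 p], of "fact p"] R by force
    show "norm (1 / (fact p * pochhammer (\<nu>+1) p)) \<le> (max r\<^sub>1 r\<^sub>2)^p / fact p" for p
      using bounds(4)[of p] divide_right_mono[OF max(2)[of r\<^sub>1 r\<^sub>2 p], of "fact p"] R by force
  qed (use R in auto)
qed

section \<open>Rearranging the bilinear series\<close>

lemma has_sum_product_nonneg:
  fixes f :: "'a \<Rightarrow> real" and g :: "'b \<Rightarrow> real"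
  assumes f: "(f has_sum a) A" and g: "(g has_sum b) B" and "\<And>x. f x \<ge> 0" "\<And>y. g y \<ge> 0"
  shows "((\<lambda>(x,y). f x * g y) has_sum a * b) (A \<times> B)"
proof -
  have rows: "((\<lambda>y. f x * g y) has_sum f x * b) B" for x
    using has_sum_cmult_right[OF g] by simp
  have "((\<lambda>x. f x * b) has_sum a * b) A" by (rule has_sum_cmult_left[OF f])
  moreover have "(\<lambda>(x,y). f x * g y) summable_on A \<times> B"
    using rows calculation assms(3,4)
    by (intro summable_on_SigmaI[where g="\<lambda>x. f x * b"]) (auto intro: has_sum_imp_summable)
  ultimately show ?thesis using rows by (intro has_sum_SigmaI) auto
qed

lemma has_sum_exp_series:
  fixes r :: real
  assumes "r \<ge> 0"
  shows "((\<lambda>n. r^n / fact n) has_sum exp r) UNIV"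
proof -
  have "(\<lambda>n. r^n / fact n) sums exp r"
    using exp_converges[of r] by (simp add: divide_inverse mult.commute)
  with assms show ?thesis by (intro sums_nonneg_imp_has_sum) auto
qed

lemma has_sum_half_powers: "((\<lambda>n. (1/2::real)^n) has_sum 2) UNIV"
  using geometric_sums[of "1/2::real"] by (intro sums_nonneg_imp_has_sum) auto

lemma norm_hankel_term_le:
  fixes G :: "nat \<Rightarrow> nat \<Rightarrow> complex" and X :: "nat \<Rightarrow> complex"
  assumes "R \<ge> 0" "r \<ge> 0" and G: "\<And>p L. norm (G p L) \<le> R^p"
    and X: "\<And>p. norm (X p) \<le> r^p / fact p"
  shows "norm (G p L * X p * z^p) \<le> (R * r * norm z)^p / fact p"
proof -
  have "norm (G p L * X p * z^p) \<le> R^p * (r^p / fact p) * norm z ^ p"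
    unfolding norm_mult norm_power using G X assms(1,2) by (intro mult_mono) auto
  then show ?thesis by (simp add: power_mult_distrib)
qed

lemma hankel_row_has_sum:
  fixes G :: "nat \<Rightarrow> nat \<Rightarrow> complex" and X :: "nat \<Rightarrow> complex"
  assumes "R \<ge> 0" "r \<ge> 0" and G: "\<And>p L. norm (G p L) \<le> R^p"
    and X: "\<And>p. norm (X p) \<le> r^p / fact p"
  shows "((\<lambda>p. G p L * X p * z^p) has_sum (\<Sum>p. G p L * X p * z^p)) UNIV"
proof -
  have "summable (\<lambda>p. (R * r * norm z)^p / fact p)"
    using summable_exp[of "R * r * norm z"] by (simp add: divide_inverse mult.commute)
  then have norm_summable: "summable (\<lambda>p. norm (G p L * X p * z^p))"
    by (rule summable_comparison_test'[where N=0]) (use norm_hankel_term_le[OF assms] in auto)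
  then have "summable (\<lambda>p. G p L * X p * z^p)" by (rule summable_norm_cancel)
  with norm_summable show ?thesis by (intro norm_summable_imp_has_sum summable_sums)
qed

lemma hankel_triple_summable:
  fixes W X Y :: "nat \<Rightarrow> complex" and G :: "nat \<Rightarrow> nat \<Rightarrow> complex"
  assumes lower: "\<And>p L. p < L \<Longrightarrow> G p L = 0" and "R \<ge> 1" "r \<ge> 0"
    and W: "\<And>L. norm (W L) \<le> R^L" and G: "\<And>p L. norm (G p L) \<le> R^p"
    and X: "\<And>p. norm (X p) \<le> r^p / fact p" and Y: "\<And>q. norm (Y q) \<le> r^q / fact q"
  shows "(\<lambda>(L,p,q). W L * (G p L * X p * z^p) * (G q L * Y q * z^q)) summable_on UNIV \<times> UNIV \<times> UNIV"
proof -
  define s where "s = R * r * norm z"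
  have "s \<ge> 0" using assms by (simp add: s_def)
  have term_le: "norm (G p L * V p * z^p) \<le> s^p / fact p"
    if "\<And>p. norm (V p) \<le> r^p / fact p" for V :: "nat \<Rightarrow> complex" and p L
    unfolding s_def using assms(2,3) by (intro norm_hankel_term_le G that) auto
  define B where "B = (\<lambda>(L,p,q). (1/2::real)^L * ((2 * R * s)^p / fact p * (s^q / fact q)))"
  define E where "E = (\<lambda>(p,q). (2 * R * s)^p / fact p * (s^q / fact q))"
  have "(E has_sum exp (2 * R * s) * exp s) (UNIV \<times> UNIV)"
    unfolding E_def using \<open>s \<ge> 0\<close> \<open>R \<ge> 1\<close>
    by (intro has_sum_product_nonneg has_sum_exp_series) auto
  then have "((\<lambda>(L,pq). (1/2)^L * E pq) has_sum 2 * (exp (2 * R * s) * exp s)) (UNIV \<times> UNIV \<times> UNIV)"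
    using \<open>s \<ge> 0\<close> \<open>R \<ge> 1\<close>
    by (intro has_sum_product_nonneg has_sum_half_powers) (auto simp: E_def)
  then have B_summable: "B summable_on UNIV \<times> UNIV \<times> UNIV"
    unfolding B_def E_def by (auto intro: has_sum_imp_summable simp: case_prod_beta')
  have B_ge: "norm (W L * (G p L * X p * z^p) * (G q L * Y q * z^q)) \<le> B (L,p,q)" for L p q
  proof (cases "L \<le> p")
    case True
    have "R^L \<le> (1/2)^L * (2*R)^p"
      using power_increasing[OF True, of "2*R"] \<open>R \<ge> 1\<close> by (simp add: power_mult_distrib field_simps)
    have "norm (W L * (G p L * X p * z^p) * (G q L * Y q * z^q))
        = norm (W L) * norm (G p L * X p * z^p) * norm (G q L * Y q * z^q)"
      by (simp only: norm_mult[of "W L * (G p L * X p * z^p)"] norm_mult[of "W L"])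
    also have "\<dots> \<le> R^L * (s^p / fact p) * (s^q / fact q)"
      using W term_le[OF X] term_le[OF Y] \<open>s \<ge> 0\<close> \<open>R \<ge> 1\<close> by (intro mult_mono) auto
    also have "\<dots> \<le> (1/2)^L * (2*R)^p * (s^p / fact p) * (s^q / fact q)"
      using \<open>R^L \<le> (1/2)^L * (2*R)^p\<close> \<open>s \<ge> 0\<close> by (intro mult_right_mono) auto
    also have "\<dots> = B (L,p,q)" by (simp add: B_def power_mult_distrib)
    finally show ?thesis .
  qed (use lower \<open>s \<ge> 0\<close> \<open>R \<ge> 1\<close> in \<open>simp add: B_def\<close>)
  have le: "norm ((\<lambda>(L,p,q). W L * (G p L * X p * z^p) * (G q L * Y q * z^q)) x) \<le> B x" for x
    using B_ge by (cases x) auto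
  show ?thesis
    by (rule abs_summable_summable, rule Infinite_Sum.abs_summable_on_comparison_test'[OF B_summable le])
qed

lemma has_sum_regroup_diagonal:
  fixes f :: "nat \<times> nat \<times> nat \<Rightarrow> 'a::{ab_group_add, t2_space, uniform_topological_group_add}"
  assumes S: "(f has_sum S) (UNIV \<times> UNIV \<times> UNIV)" and lower: "\<And>L p q. p < L \<Longrightarrow> f (L, p, q) = 0"
  shows "((\<lambda>n. \<Sum>p\<le>n. \<Sum>L\<le>n. f (L, p, n-p)) has_sum S) UNIV"
proof -
  define h where "h = (\<lambda>(n,p,L). f (L, p, n-p))"
  have "(f has_sum S) (UNIV \<times> UNIV \<times> UNIV) = (h has_sum S) (SIGMA n:UNIV. {..n} \<times> UNIV)"
    by (rule has_sum_reindex_bij_witness[where i="\<lambda>(n,p,L). (L,p,n-p)" and j="\<lambda>(L,p,q). (p+q,p,L)"])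
       (auto simp: h_def)
  with S have "(h has_sum S) (SIGMA n:UNIV. {..n} \<times> UNIV)" by simp
  then show ?thesis
  proof (rule has_sum_Sigma')
    fix n
    show "((\<lambda>pL. h (n, pL)) has_sum (\<Sum>p\<le>n. \<Sum>L\<le>n. f (L, p, n-p))) ({..n} \<times> UNIV)"
    proof (rule has_sum_finite_neutralI[where B="{..n} \<times> {..n}"])
      show "h (n, pL) = 0" if "pL \<in> {..n} \<times> UNIV - {..n} \<times> {..n}" for pL
      proof -
        obtain p L where pL: "pL = (p, L)" by (cases pL)
        with that have "p < L" by auto
        with pL show ?thesis by (simp add: h_def lower)
      qed
    qed (auto simp: h_def sum.cartesian_product')
  qed
qed

lemma hankel_diagonal_sum:
  fixes W X Y M :: "nat \<Rightarrow> 'a::comm_ring_1" and G :: "nat \<Rightarrow> nat \<Rightarrow> 'a"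
  assumes factor: "\<And>p q N. p \<le> N \<Longrightarrow> (\<Sum>L\<le>N. W L * G p L * G q L) = M (p + q)"
  shows "(\<Sum>p\<le>n. \<Sum>L\<le>n. W L * (G p L * X p * z^p) * (G (n-p) L * Y (n-p) * z^(n-p)))
           = M n * (\<Sum>p\<le>n. X p * Y (n-p)) * z^n"
proof -
  have "(\<Sum>L\<le>n. W L * (G p L * X p * z^p) * (G (n-p) L * Y (n-p) * z^(n-p))) = X p * Y (n-p) * z^n * M n"
    if "p \<le> n" for p
  proof -
    from that have "z^n = z^p * z^(n-p)" by (simp flip: power_add)
    then have "(\<Sum>L\<le>n. W L * (G p L * X p * z^p) * (G (n-p) L * Y (n-p) * z^(n-p)))
        = X p * Y (n-p) * z^n * (\<Sum>L\<le>n. W L * G p L * G (n-p) L)"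
      by (simp add: sum_distrib_left algebra_simps)
    with factor[OF that, of "n-p"] that show ?thesis by simp
  qed
  then have "(\<Sum>p\<le>n. \<Sum>L\<le>n. W L * (G p L * X p * z^p) * (G (n-p) L * Y (n-p) * z^(n-p)))
      = (\<Sum>p\<le>n. X p * Y (n-p) * z^n * M n)"
    by (intro sum.cong) auto
  then show ?thesis by (simp add: sum_distrib_left sum_distrib_right mult_ac)
qed

lemma hankel_bilinear_series:
  fixes W X Y M :: "nat \<Rightarrow> complex" and G :: "nat \<Rightarrow> nat \<Rightarrow> complex"
  assumes factor: "\<And>p q N. p \<le> N \<Longrightarrow> (\<Sum>L\<le>N. W L * G p L * G q L) = M (p + q)"
    and lower: "\<And>p L. p < L \<Longrightarrow> G p L = 0" and "R \<ge> 1" "r \<ge> 0"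
    and W: "\<And>L. norm (W L) \<le> R^L" and G: "\<And>p L. norm (G p L) \<le> R^p"
    and X: "\<And>p. norm (X p) \<le> r^p / fact p" and Y: "\<And>q. norm (Y q) \<le> r^q / fact q"
  shows "(\<lambda>L. W L * (\<Sum>p. G p L * X p * z^p) * (\<Sum>q. G q L * Y q * z^q))
           sums (\<Sum>n. M n * (\<Sum>p\<le>n. X p * Y (n-p)) * z^n)"
proof -
  define u where "u L p = G p L * X p * z^p" for L p
  define v where "v L q = G q L * Y q * z^q" for L q
  define f where "f = (\<lambda>(L,p,q). W L * u L p * v L q)"
  have "f summable_on UNIV \<times> UNIV \<times> UNIV"
    unfolding f_def u_def v_def by (rule hankel_triple_summable[OF lower assms(3-8)])
  then obtain S where S: "(f has_sum S) (UNIV \<times> UNIV \<times> UNIV)"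
    using summable_on_def by blast
  have by_L: "((\<lambda>L. W L * suminf (u L) * suminf (v L)) has_sum S) UNIV"
  proof (rule has_sum_Sigma'[OF S])
    fix L
    have u: "(u L has_sum suminf (u L)) UNIV"
      unfolding u_def by (rule hankel_row_has_sum[OF _ _ G X]) (use assms(3,4) in auto)
    have v: "(v L has_sum suminf (v L)) UNIV"
      unfolding v_def by (rule hankel_row_has_sum[OF _ _ G Y]) (use assms(3,4) in auto)
    have row_summable: "(\<lambda>pq. f (L, pq)) summable_on UNIV \<times> UNIV"
      using summable_on_SigmaD1[of "\<lambda>L pq. f (L, pq)" UNIV "\<lambda>_. UNIV \<times> UNIV" L] S
      by (auto intro: has_sum_imp_summable)
    have "infsum (\<lambda>pq. f (L, pq)) (UNIV \<times> UNIV) = (\<Sum>\<^sub>\<infinity>p. \<Sum>\<^sub>\<infinity>q. f (L, p, q))"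
      by (rule infsum_Sigma_banach[symmetric, OF row_summable])
    also have "\<dots> = (\<Sum>\<^sub>\<infinity>p. \<Sum>\<^sub>\<infinity>q. W L * u L p * v L q)" by (simp add: f_def)
    also have "\<dots> = W L * suminf (u L) * suminf (v L)"
      using infsumI[OF u] infsumI[OF v] by (simp add: infsum_cmult_left' infsum_cmult_right')
    finally show "((\<lambda>pq. f (L, pq)) has_sum W L * suminf (u L) * suminf (v L)) (UNIV \<times> UNIV)"
      using has_sum_infsum[OF row_summable] by simp
  qed
  have "((\<lambda>n. \<Sum>p\<le>n. \<Sum>L\<le>n. f (L, p, n-p)) has_sum S) UNIV"
    using S by (rule has_sum_regroup_diagonal) (simp add: f_def u_def lower)
  moreover have "(\<Sum>p\<le>n. \<Sum>L\<le>n. f (L, p, n-p)) = M n * (\<Sum>p\<le>n. X p * Y (n-p)) * z^n" for n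
    unfolding f_def u_def v_def using hankel_diagonal_sum[where W=W and G=G and M=M, OF factor] by simp
  ultimately have "((\<lambda>n. M n * (\<Sum>p\<le>n. X p * Y (n-p)) * z^n) has_sum S) UNIV" by simp
  then have "S = (\<Sum>n. M n * (\<Sum>p\<le>n. X p * Y (n-p)) * z^n)"
    by (intro sums_unique has_sum_imp_sums)
  with has_sum_imp_sums[OF by_L] show ?thesis by (simp add: u_def [abs_def] v_def [abs_def])
qed

section \<open>Identification of the series\<close>

lemma hankel_lower_term_shift:
  fixes c m z :: complex
  assumes c: "\<And>n. c + of_nat n \<noteq> 0" and m: "\<And>n. m + 1 + of_nat n \<noteq> 0"
  shows "hankel_lower c (i+L) L * (1 / (fact (i+L) * pochhammer (m+1) (i+L))) * z^(i+L)
    = z^L / (fact L * pochhammer (m+1) L)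
      * (pochhammer (of_nat L + 1/2) i / (pochhammer (of_nat L + m + 1) i * pochhammer (c + 2 * of_nat L) i)
         * (z/4)^i / fact i)"
proof -
  define H where "H = pochhammer (1/2::complex) L"
  define H' where "H' = pochhammer (of_nat L + 1/2 :: complex) i"
  define P where "P = pochhammer (m+1) L"
  define P' where "P' = pochhammer (of_nat L + m + 1) i"
  define Q where "Q = pochhammer (c + 2 * of_nat L) i"
  have G: "hankel_lower c (i+L) L = fact (2*(L+i)) / (fact (2*L) * 16^i * Q * fact i)"
    using hankel_lower_below_diag[of c L i] by (simp add: Q_def add.commute)
  have F1: "(fact (2*(L+i)) :: complex) = 4^L * 4^i * H * H' * fact (L+i)"
    using fact_double[of "L+i", where 'a=complex] pochhammer_product'[of "1/2::complex" L i]
    by (simp add: H_def H'_def power_mult power_add add.commute)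
  have F2: "(fact (2*L) :: complex) = 4^L * H * fact L"
    using fact_double[of L, where 'a=complex] by (simp add: H_def power_mult)
  have P: "pochhammer (m+1) (i+L) = P * P'"
    using pochhammer_product'[of "m+1" L i] by (simp add: P_def P'_def add_ac)
  have "H \<noteq> 0" "P \<noteq> 0" "P' \<noteq> 0" "Q \<noteq> 0"
    using pochhammer_shift_nonzero[OF half_plus_of_nat_neq_0, of 0 L] pochhammer_shift_nonzero[OF m, of 0 L]
      pochhammer_shift_nonzero[OF m, of L i] pochhammer_shift_nonzero[OF c, of "2*L" i]
    by (simp_all add: H_def P_def P'_def Q_def add_ac)
  moreover have "(16::complex)^i = 4^i * 4^i" by (simp flip: power_mult_distrib)
  ultimately show ?thesis
    unfolding H'_def[symmetric] P'_def[symmetric] Q_def[symmetric] P_def[symmetric] G P F1 F2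
    by (simp add: field_simps power_add power_divide)
qed

lemma hankel_lower_series:
  fixes c m z :: complex
  assumes c: "\<And>n. c + of_nat n \<noteq> 0" and m: "\<And>n. m + 1 + of_nat n \<noteq> 0"
  shows "(\<Sum>p. hankel_lower c p L * (1 / (fact p * pochhammer (m+1) p)) * z^p)
           = z^L / (fact L * pochhammer (m+1) L)
             * hypergeo [of_nat L + 1/2] [of_nat L + m + 1, c + 2 * of_nat L] (z/4)"
proof -
  define u where "u p = hankel_lower c p L * (1 / (fact p * pochhammer (m+1) p)) * z^p" for p
  define C where "C = z^L / (fact L * pochhammer (m+1) L)"
  define t where "t i = (\<Prod>a\<leftarrow>[of_nat L + 1/2]. pochhammer a i)
    / (\<Prod>b\<leftarrow>[of_nat L + m + 1, c + 2 * of_nat L]. pochhammer b i) * (z/4)^i / fact i" for i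
  obtain R where "R \<ge> 1" and R: "\<And>p L. norm (hankel_lower c p L) \<le> R^p"
    using norm_hankel_lower_le[OF c] by blast
  obtain r where "r \<ge> 0" and r: "\<And>p. norm (1 / (fact p * pochhammer (m+1) p)) \<le> r^p / fact p"
    using norm_inverse_fact_pochhammer_le[OF m] by blast
  have "u sums suminf u"
    unfolding u_def using \<open>R \<ge> 1\<close> \<open>r \<ge> 0\<close> by (intro has_sum_imp_sums hankel_row_has_sum[OF _ _ R r]) auto
  moreover have "sum u {..<L} = 0" by (simp add: u_def hankel_lower_above_diag)
  ultimately have "(\<lambda>i. u (i + L)) sums suminf u" by (simp add: sums_iff_shift)
  moreover have "u (i + L) = C * t i" for i
    unfolding u_def C_def t_def using hankel_lower_term_shift[OF c m] by simp
  ultimately have Ct: "(\<lambda>i. C * t i) sums suminf u" by simp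
  have "suminf u = C * suminf t"
  proof (cases "C = 0")
    case True
    with Ct show ?thesis using sums_unique2[OF _ sums_zero] by simp
  next
    case False
    then have "t sums (suminf u / C)" using sums_mult[OF Ct, of "1/C"] by simp
    with False show ?thesis by (simp add: sums_unique[symmetric])
  qed
  then show ?thesis unfolding u_def C_def t_def hypergeo_def .
qed

lemma moment_convolution_eq_coefficient:
  fixes \<mu> \<nu> z :: complex
  assumes \<mu>: "\<And>n. \<mu> + 1 + of_nat n \<noteq> 0" and \<nu>: "\<And>n. \<nu> + 1 + of_nat n \<noteq> 0"
    and \<mu>\<nu>: "\<And>n. \<mu> + \<nu> + 1 + of_nat n \<noteq> 0"
  shows "moment (\<mu>/2 + \<nu>/2 + 1/2) n
           * (\<Sum>p\<le>n. 1 / (fact p * pochhammer (\<mu>+1) p) * (1 / (fact (n-p) * pochhammer (\<nu>+1) (n-p)))) * z^n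
         = (\<Prod>a\<leftarrow>[1/2, \<mu>/2 + \<nu>/2 + 1]. pochhammer a n)
           / (\<Prod>b\<leftarrow>[\<mu>+1, \<nu>+1, \<mu>+\<nu>+1]. pochhammer b n) * z^n / fact n"
proof -
  define c where "c = \<mu>/2 + \<nu>/2 + 1/2"
  have "2*c = \<mu> + \<nu> + 1" by (simp add: c_def algebra_simps)
  have \<mu>': "pochhammer (\<mu>+1) n \<noteq> 0" and \<nu>': "pochhammer (\<nu>+1) n \<noteq> 0" for n
    using pochhammer_shift_nonzero[OF \<mu>, of 0] pochhammer_shift_nonzero[OF \<nu>, of 0] by simp_all
  have "c + of_nat j \<noteq> 0" for j
  proof -
    have "\<mu> + \<nu> + 1 + of_nat (2*j) = 2 * (c + of_nat j)"
      using \<open>2*c = \<mu> + \<nu> + 1\<close> by simp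
    with \<mu>\<nu>[of "2*j"] show ?thesis by (metis mult_zero_right)
  qed
  then have "pochhammer (\<mu>+\<nu>+1) n \<noteq> 0" "pochhammer c n \<noteq> 0"
    using pochhammer_shift_nonzero[OF \<mu>\<nu>, of 0 n] pochhammer_shift_nonzero[of c 0 n] by simp_all
  moreover have "pochhammer (\<mu>+\<nu>+1) n * pochhammer (\<mu>+\<nu>+1 + of_nat n) n
      = 4^n * pochhammer c n * pochhammer (\<mu>/2 + \<nu>/2 + 1) n"
    using pochhammer_double_product[of c n] \<open>2*c = \<mu> + \<nu> + 1\<close> by (simp add: c_def algebra_simps)
  moreover have "\<mu> + 1 + (\<nu> + 1) + of_nat n - 1 = \<mu>+\<nu>+1 + of_nat n" by simp
  ultimately show ?thesis
    unfolding c_def[symmetric] moment_def sum_inverse_pochhammer_convolution[OF \<mu>' \<nu>']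
    using \<mu>'[of n] \<nu>'[of n] by (simp add: field_simps)
qed

lemma gen_poch_half_shift:
  fixes m :: complex
  assumes "\<And>n. m + 1 + of_nat n \<noteq> 0"
  shows "gen_poch (of_nat L + 1/2) (m + 1/2) = Gamma (m+1) * pochhammer (m+1) L / (Gamma (1/2) * pochhammer (1/2) L)"
proof -
  have args: "of_nat L + 1/2 + (m + 1/2) = (m + 1) + of_nat L" "of_nat L + 1/2 = 1/2 + (of_nat L :: complex)"
    by (simp_all add: algebra_simps)
  have "m + 1 \<notin> \<int>\<^sub>\<le>\<^sub>0" "1/2 \<notin> (\<int>\<^sub>\<le>\<^sub>0 :: complex set)"
    using assms half_plus_of_nat_neq_0[where 'a=complex]
    by (auto intro!: not_nonpos_Int_if_shifts_nonzero simp: add.commute)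
  show ?thesis
    unfolding gen_poch_def args(1) unfolding args(2) Gamma_add_of_nat[OF \<open>m + 1 \<notin> \<int>\<^sub>\<le>\<^sub>0\<close>]
      Gamma_add_of_nat[OF \<open>1/2 \<notin> \<int>\<^sub>\<le>\<^sub>0\<close>] ..
qed

lemma two_powr_complementary_exponent:
  fixes \<mu> \<nu> :: complex
  shows "2 powr (4 * of_nat L - 2 * \<mu> - 2 * \<nu> + 2) = (16::complex)^L / (2 * 2 powr (2 * (\<mu> + \<nu>) - 3))"
proof -
  have "(2::complex) powr (2 * (\<mu> + \<nu>) - 3) * 2 powr (4 * of_nat L - 2 * \<mu> - 2 * \<nu> + 2) * 2 powr 1
      = 2 powr ((2 * (\<mu> + \<nu>) - 3) + (4 * of_nat L - 2 * \<mu> - 2 * \<nu> + 2) + 1)"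
    by (simp only: powr_add)
  also have "(2 * (\<mu> + \<nu>) - 3) + (4 * of_nat L - 2 * \<mu> - 2 * \<nu> + 2) + 1 = of_nat (4*L)"
    by (simp add: algebra_simps)
  finally have "(2::complex) powr (2 * (\<mu> + \<nu>) - 3) * 2 powr (4 * of_nat L - 2 * \<mu> - 2 * \<nu> + 2) * 2 powr 1
      = 2 powr (of_nat (4*L))" .
  moreover have "(2::complex) powr 1 = 2" "(2::complex) powr (of_nat (4*L)) = 16^L"
    using powr_nat[of 2 1] powr_nat[of 2 "4*L"] by (simp_all add: power_mult del: of_nat_mult)
  ultimately show ?thesis by (simp add: field_simps)
qed

lemma summand_eq_hankel_diag:
  fixes k \<mu> \<nu> H\<^sub>1 H\<^sub>2 :: complex and L :: nat
  assumes \<mu>: "\<And>n. \<mu> + 1 + of_nat n \<noteq> 0" and \<nu>: "\<And>n. \<nu> + 1 + of_nat n \<noteq> 0"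
    and \<mu>\<nu>: "\<And>n. \<mu> + \<nu> - 1 + of_nat n \<noteq> 0"
  shows "(2 powr (2 * (\<mu> + \<nu>) - 3) * (\<mu> + \<nu> - 1) * Gamma (\<mu> + 1) * Gamma (\<nu> + 1)
        / (of_real pi * Gamma (\<mu> + \<nu> - 1)))
      * ((-1) ^ (2 * L) * k ^ (4 * L) * 2 powr (4 * of_nat L - 2 * \<mu> - 2 * \<nu> + 2)
          * (pochhammer (\<mu> / 2 + \<nu> / 2) (2 * L))\<^sup>2 * Gamma (2 * of_nat L + \<mu> + \<nu> - 1)
         / (fact (2 * L) * gen_poch (of_nat L + 1 / 2) (\<mu> + 1 / 2)
            * gen_poch (of_nat L + 1 / 2) (\<nu> + 1 / 2)
            * (2 * of_nat L + \<mu> / 2 + \<nu> / 2 - 1 / 2)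
            * (pochhammer (\<mu> + \<nu> - 1) (2 * L))\<^sup>2
            * (pochhammer (2 * of_nat L + \<mu> + \<nu> - 1) (2 * L))\<^sup>2)
         * H\<^sub>1 * H\<^sub>2)
    = hankel_diag (\<mu>/2 + \<nu>/2 + 1/2) L * ((-(k^2))^L / (fact L * pochhammer (\<mu>+1) L) * H\<^sub>1)
        * ((-(k^2))^L / (fact L * pochhammer (\<nu>+1) L) * H\<^sub>2)"
proof -
  define c where "c = \<mu>/2 + \<nu>/2 + 1/2"
  define z where "z = (-(k^2))^L"
  define A where "A = pochhammer (\<mu> / 2 + \<nu> / 2) (2 * L)"
  define S where "S = pochhammer (\<mu> + \<nu> - 1) (2 * L)"
  define S' where "S' = pochhammer (2 * of_nat L + \<mu> + \<nu> - 1) (2 * L)"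
  define d where "d = 2 * of_nat L + \<mu> / 2 + \<nu> / 2 - 1 / 2"
  define H where "H = pochhammer (1/2::complex) L"
  define E where "E = (2::complex) powr (2 * (\<mu> + \<nu>) - 3)"
  have W: "hankel_diag c L
      = (\<mu> + \<nu> - 1) / 2 * 16^L * A^2 * S * (H * fact L)^2 / (fact (2*L) * d * (S * S')^2)"
    unfolding c_def A_def S_def S'_def H_def d_def by (rule hankel_diag_altdef_half_sum[OF \<mu>\<nu>])
  have nonpos: "\<mu> + 1 \<notin> \<int>\<^sub>\<le>\<^sub>0" "\<nu> + 1 \<notin> \<int>\<^sub>\<le>\<^sub>0" "\<mu> + \<nu> - 1 \<notin> \<int>\<^sub>\<le>\<^sub>0" "1/2 \<notin> (\<int>\<^sub>\<le>\<^sub>0 :: complex set)"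
    using \<mu> \<nu> \<mu>\<nu> half_plus_of_nat_neq_0[where 'a=complex]
    by (auto intro!: not_nonpos_Int_if_shifts_nonzero simp: add.commute)
  have "2 * of_nat L + \<mu> + \<nu> - 1 = (\<mu> + \<nu> - 1) + of_nat (2*L)" by simp
  then have Gamma_S: "Gamma (2 * of_nat L + \<mu> + \<nu> - 1) = Gamma (\<mu> + \<nu> - 1) * S"
    unfolding S_def by (simp only: Gamma_add_of_nat[OF nonpos(3)])
  have pi: "(of_real pi :: complex) = Gamma (1/2)^2"
    unfolding Gamma_one_half_complex by (simp flip: of_real_power)
  have sign: "(-1) ^ (2 * L) * k ^ (4 * L) = z * z"
    unfolding z_def by (simp add: power_mult_distrib power_mult[symmetric] power_add[symmetric] mult_2 algebra_simps)
  have "pochhammer (\<mu>+1) L \<noteq> 0" "pochhammer (\<nu>+1) L \<noteq> 0" "H \<noteq> 0" "d \<noteq> 0" "S \<noteq> 0" "S' \<noteq> 0"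
    using pochhammer_shift_nonzero[OF \<mu>, of 0 L] pochhammer_shift_nonzero[OF \<nu>, of 0 L]
      pochhammer_shift_nonzero[OF half_plus_of_nat_neq_0, of 0 L] \<mu>\<nu>[of "4*L"]
      pochhammer_shift_nonzero[OF \<mu>\<nu>, of 0 "2*L"] pochhammer_shift_nonzero[OF \<mu>\<nu>, of "2*L" "2*L"]
    by (auto simp: H_def d_def S_def S'_def algebra_simps)
  moreover have "E \<noteq> 0" by (simp add: E_def)
  ultimately show ?thesis
    using Gamma_nonzero[OF nonpos(1)] Gamma_nonzero[OF nonpos(2)] Gamma_nonzero[OF nonpos(3)]
      Gamma_nonzero[OF nonpos(4)]
    unfolding two_powr_complementary_exponent E_def[symmetric] gen_poch_half_shift[OF \<mu>] gen_poch_half_shift[OF \<nu>]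
      Gamma_S pi sign c_def[symmetric] W
    unfolding A_def[symmetric] S_def[symmetric] S'_def[symmetric] d_def[symmetric] H_def[symmetric] z_def[symmetric]
    by (simp add: field_simps power2_eq_square)
qed

lemma hypergeo_2F3_hankel_expansion:
  fixes \<mu> \<nu> z :: complex
  assumes \<mu>: "\<And>n. \<mu> + 1 + of_nat n \<noteq> 0" and \<nu>: "\<And>n. \<nu> + 1 + of_nat n \<noteq> 0"
    and \<mu>\<nu>: "\<And>n. \<mu> + \<nu> - 1 + of_nat n \<noteq> 0"
  defines "c \<equiv> \<mu>/2 + \<nu>/2 + 1/2"
  shows "(\<lambda>L. hankel_diag c L
      * (z^L / (fact L * pochhammer (\<mu>+1) L) * hypergeo [of_nat L + 1/2] [of_nat L + \<mu> + 1, c + 2 * of_nat L] (z/4))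
      * (z^L / (fact L * pochhammer (\<nu>+1) L) * hypergeo [of_nat L + 1/2] [of_nat L + \<nu> + 1, c + 2 * of_nat L] (z/4)))
    sums hypergeo [1/2, \<mu>/2 + \<nu>/2 + 1] [\<mu>+1, \<nu>+1, \<mu>+\<nu>+1] z"
proof -
  have c: "c - 1 + of_nat n \<noteq> 0" "c + of_nat n \<noteq> 0" for n
    using \<mu>\<nu>[of "2*n"] \<mu>\<nu>[of "2*n+2"] unfolding c_def by (auto simp: field_simps)
  have \<mu>\<nu>': "\<mu> + \<nu> + 1 + of_nat n \<noteq> 0" for n
    using \<mu>\<nu>[of "n+2"] by (simp add: algebra_simps)
  obtain R r where "R \<ge> 1" "r \<ge> 0" and bounds:
    "\<And>L. norm (hankel_diag c L) \<le> R^L" "\<And>p L. norm (hankel_lower c p L) \<le> R^p"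
    "\<And>p. norm (1 / (fact p * pochhammer (\<mu>+1) p)) \<le> r^p / fact p"
    "\<And>p. norm (1 / (fact p * pochhammer (\<nu>+1) p)) \<le> r^p / fact p"
    using hankel_common_bounds[OF c(1) \<mu> \<nu>] by blast
  have "(\<lambda>L. hankel_diag c L * (\<Sum>p. hankel_lower c p L * (1 / (fact p * pochhammer (\<mu>+1) p)) * z^p)
                            * (\<Sum>q. hankel_lower c q L * (1 / (fact q * pochhammer (\<nu>+1) q)) * z^q))
      sums (\<Sum>n. moment c n * (\<Sum>p\<le>n. 1 / (fact p * pochhammer (\<mu>+1) p)
                                       * (1 / (fact (n-p) * pochhammer (\<nu>+1) (n-p)))) * z^n)"
    by (rule hankel_bilinear_series[OF moment_hankel_factorization[OF c(1)] hankel_lower_above_diag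
          \<open>R \<ge> 1\<close> \<open>r \<ge> 0\<close> bounds])
  then show ?thesis
    unfolding hankel_lower_series[OF c(2) \<mu>] hankel_lower_series[OF c(2) \<nu>]
    unfolding hypergeo_def c_def moment_convolution_eq_coefficient[OF \<mu> \<nu> \<mu>\<nu>'] .
qed

theorem mainTheorem9:
  fixes k \<mu> \<nu> :: complex
  assumes "\<And>n::nat. \<mu> \<noteq> - of_nat (Suc n)"
    and "\<And>n::nat. \<nu> \<noteq> - of_nat (Suc n)"
    and "\<And>n::nat. \<mu> + \<nu> \<noteq> 1 - of_nat n"
  shows "(\<lambda>L::nat.
      (2 powr (2 * (\<mu> + \<nu>) - 3) * (\<mu> + \<nu> - 1) * Gamma (\<mu> + 1) * Gamma (\<nu> + 1)
        / (of_real pi * Gamma (\<mu> + \<nu> - 1)))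
      * ((-1) ^ (2 * L) * k ^ (4 * L) * 2 powr (4 * of_nat L - 2 * \<mu> - 2 * \<nu> + 2)
          * (pochhammer (\<mu> / 2 + \<nu> / 2) (2 * L))\<^sup>2 * Gamma (2 * of_nat L + \<mu> + \<nu> - 1)
         / (fact (2 * L) * gen_poch (of_nat L + 1 / 2) (\<mu> + 1 / 2)
            * gen_poch (of_nat L + 1 / 2) (\<nu> + 1 / 2)
            * (2 * of_nat L + \<mu> / 2 + \<nu> / 2 - 1 / 2)
            * (pochhammer (\<mu> + \<nu> - 1) (2 * L))\<^sup>2
            * (pochhammer (2 * of_nat L + \<mu> + \<nu> - 1) (2 * L))\<^sup>2)
         * hypergeo [of_nat L + 1 / 2] [of_nat L + \<mu> + 1, 2 * of_nat L + \<mu> / 2 + \<nu> / 2 + 1 / 2] (- k\<^sup>2 / 4)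
         * hypergeo [of_nat L + 1 / 2] [2 * of_nat L + \<mu> / 2 + \<nu> / 2 + 1 / 2, of_nat L + \<nu> + 1] (- k\<^sup>2 / 4)))
    sums hypergeo [1 / 2, \<mu> / 2 + \<nu> / 2 + 1] [\<mu> + 1, \<nu> + 1, \<mu> + \<nu> + 1] (- k\<^sup>2)"
proof -
  have \<mu>: "\<mu> + 1 + of_nat n \<noteq> 0" and \<nu>: "\<nu> + 1 + of_nat n \<noteq> 0" for n
    using assms(1,2)[of n] by (auto simp: algebra_simps eq_neg_iff_add_eq_0)
  have \<mu>\<nu>: "\<mu> + \<nu> - 1 + of_nat n \<noteq> 0" for n
    using assms(3)[of n] by (auto simp: algebra_simps)
  have c: "\<mu>/2 + \<nu>/2 + 1/2 + 2 * of_nat L = 2 * of_nat L + \<mu> / 2 + \<nu> / 2 + 1 / 2" for L :: nat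
    by (simp add: algebra_simps)
  have swap: "hypergeo as [b, of_nat L + \<nu> + 1] x = hypergeo as [of_nat L + \<nu> + 1, b] x" for as b x and L :: nat
    by (simp add: hypergeo_def mult.commute)
  show ?thesis
    using hypergeo_2F3_hankel_expansion[OF \<mu> \<nu> \<mu>\<nu>, of "- k\<^sup>2"]
    unfolding summand_eq_hankel_diag[OF \<mu> \<nu> \<mu>\<nu>] c swap by simp
qed

end
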